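(* $G^{p}$ is a subspace of $L^{p}(\mu)$.
   Context: Let $\mathcal{B}$ be the Borel $\sigma$-algebra of $\mathbb{R}$, $\lambda$ the Lebesgue measure, and $\mathcal{B}_{\infty}$ the $\sigma$-algebra on $\mathbb{R}^{\mathbb{N}}$ generated by the cylinder sets $\prod_{i=1}^{m}C_{i}\times\prod_{i=m+1}^{\infty}\mathbb{R}$ with $C_i\in\mathcal{B}$, $m\in\mathbb{N}$. Let $\mathcal{F}(\mathcal{B},\lambda)$ be the set of finite rectangles $\prod_{i\in\mathbb{N}}C_{i}$ with $C_i\in\mathcal{B}$ and $\prod_{i}\lambda(C_i)\in[0,\infty)$, with $\mathrm{vol}(\prod_{i}C_i):=\prod_i\lambda(C_i)$. The measure $\mu$ is the restriction to $\mathcal{B}_{\infty}$ of the outer measure $\mu^{\ast}(A):=\inf\{\sum_{n}\mathrm{vol}(\mathscr{C}_{n}) : \mathscr{C}_{n}\in\mathcal{F}(\mathcal{B},\lambda),\ A\subset\bigcup_{n}\mathscr{C}_{n}\}$ ($\inf\varnothing=\infty$). Fix $1\le p<\infty$. Let $I:=\mathbb{Z}^{\mathbb{N}}$ and, for $\mathfrak{a}=(a_n)\in I$, $\mathcal{C}_{\mathfrak{a}}:=\prod_{n\in\mathbb{N}}[a_{n},a_{n}+1)$. For $f\in L^p(\mu)$ let $\mathcal{O}_{f}:=\{\mathfrak{a}\in I : \int_{\mathcal{C}_{\mathfrak{a}}}|f|^{p}\,d\mu\neq 0\}$ (a countable set) and $\mathcal{F}_{f}:=\bigsqcup_{\mathfrak{a}\in\mathcal{O}_{f}}\mathcal{C}_{\mathfrak{a}}$.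 Define $G^{p}:=\{f\in L^{p}(\mu) : \int_{\mathbb{R}^{\mathbb{N}}}|f|^{p}\,d\mu=\sum_{\mathfrak{a}\in\mathcal{O}_{f}}\int_{\mathcal{C}_{\mathfrak{a}}}|f|^{p}\,d\mu=\int_{\mathcal{F}_{f}}|f|^{p}\,d\mu\}$. *)

theory Defs
  imports "HOL-Analysis.Analysis"
begin

text \<open>Points of R^N are sequences x :: nat => real (coordinates indexed from 0).\<close>

definition Binf :: "(nat \<Rightarrow> real) set set" where
  "Binf = sigma_sets UNIV
     {{x. \<forall>i<m. x i \<in> C i} | (C :: nat \<Rightarrow> real set) m. \<forall>i<m. C i \<in> sets borel}"

definition rect :: "(nat \<Rightarrow> real set) \<Rightarrow> (nat \<Rightarrow> real) set" where
  "rect C = {x. \<forall>i. x i \<in> C i}"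

definition partial_vol :: "(nat \<Rightarrow> real set) \<Rightarrow> nat \<Rightarrow> ennreal" where
  "partial_vol C n = (\<Prod>i<n. emeasure lborel (C i))"

definition fin_rect :: "(nat \<Rightarrow> real set) \<Rightarrow> bool" where
  "fin_rect C \<longleftrightarrow> (\<forall>i. C i \<in> sets borel) \<and>
     (\<exists>v. v < \<infinity> \<and> partial_vol C \<longlonglongrightarrow> v)"

definition vol :: "(nat \<Rightarrow> real set) \<Rightarrow> ennreal" where
  "vol C = lim (partial_vol C)"

text \<open>The outer measure mu^* (Inf of the empty set is infinity).\<close>
definition mu_star :: "(nat \<Rightarrow> real) set \<Rightarrow> ennreal" where
  "mu_star A = Inf {(\<Sum>n. vol (C n)) | C :: nat \<Rightarrow> nat \<Rightarrow> real set.
                      (\<forall>n. fin_rect (C n)) \<and> A \<subseteq> (\<Union>n. rect (C n))}"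

definition mu :: "(nat \<Rightarrow> real) measure" where
  "mu = measure_of UNIV Binf mu_star"

text \<open>L^p(mu), represented by functions (the defining condition of G^p is
  invariant under a.e. equality).\<close>
definition Lp :: "real \<Rightarrow> ((nat \<Rightarrow> real) \<Rightarrow> real) set" where
  "Lp p = {f. f \<in> borel_measurable mu \<and>
              (\<integral>\<^sup>+ x. ennreal (\<bar>f x\<bar> powr p) \<partial>mu) < \<infinity>}"

definition cube :: "(nat \<Rightarrow> int) \<Rightarrow> (nat \<Rightarrow> real) set" where
  "cube a = {x. \<forall>n. real_of_int (a n) \<le> x n \<and> x n < real_of_int (a n) + 1}"

definition Ofun :: "real \<Rightarrow> ((nat \<Rightarrow> real) \<Rightarrow> real) \<Rightarrow> (nat \<Rightarrow> int) set" where
  "Ofun p f = {a. (\<integral>\<^sup>+ x\<in>cube a. ennreal (\<bar>f x\<bar> powr p) \<partial>mu) \<noteq> 0}"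

definition Ffun :: "real \<Rightarrow> ((nat \<Rightarrow> real) \<Rightarrow> real) \<Rightarrow> (nat \<Rightarrow> real) set" where
  "Ffun p f = (\<Union>a\<in>Ofun p f. cube a)"

definition Gp :: "real \<Rightarrow> ((nat \<Rightarrow> real) \<Rightarrow> real) set" where
  "Gp p = {f \<in> Lp p.
     (\<integral>\<^sup>+ x. ennreal (\<bar>f x\<bar> powr p) \<partial>mu) =
       (\<integral>\<^sup>+ a. (\<integral>\<^sup>+ x\<in>cube a. ennreal (\<bar>f x\<bar> powr p) \<partial>mu) \<partial>count_space (Ofun p f))
     \<and> (\<integral>\<^sup>+ a. (\<integral>\<^sup>+ x\<in>cube a. ennreal (\<bar>f x\<bar> powr p) \<partial>mu) \<partial>count_space (Ofun p f)) =
       (\<integral>\<^sup>+ x\<in>Ffun p f. ennreal (\<bar>f x\<bar> powr p) \<partial>mu)}"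

end

theory Submission
  imports Defs
begin

text \<open>
  Membership in \<open>G\<^sup>p\<close> only says that \<open>|f|\<^sup>p\<close> lives on countably many of the pairwise
  disjoint cubes \<open>C\<^sub>a\<close>: \<open>f \<in> G\<^sup>p\<close> iff \<open>f \<in> L\<^sup>p\<close> and \<open>f\<close> vanishes a.e. outside the union of
  the cubes \<open>C\<^sub>a\<close>, \<open>a \<in> J\<close>, for some countable \<open>J\<close>. Indeed, finiteness of \<open>\<integral>|f|\<^sup>p\<close> makes the set
  \<open>O\<^sub>f\<close> of cubes carrying mass countable, so the identity \<open>\<integral>|f|\<^sup>p = \<integral>\<^bsub>F\<^sub>f\<^esub>|f|\<^sup>p\<close> says that \<open>f\<close>
  vanishes a.e. off \<open>F\<^sub>f\<close>; conversely, if \<open>f\<close> vanishes off the cubes indexed by \<open>J\<close>, then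
  \<open>O\<^sub>f \<subseteq> J\<close> and countable additivity gives both identities defining \<open>G\<^sup>p\<close>. This condition
  is preserved by scalar multiples and, taking \<open>J\<^sub>f \<union> J\<^sub>g\<close>, by sums, while \<open>L\<^sup>p\<close> is closed
  under sums because \<open>|a + b|\<^sup>p \<le> 2\<^sup>p (|a|\<^sup>p + |b|\<^sup>p)\<close>.
\<close>

lemma countable_nonzero_if_nn_integral_count_space_finite:
  fixes \<phi> :: "'a \<Rightarrow> ennreal"
  assumes "(\<integral>\<^sup>+ a. \<phi> a \<partial>count_space Q) < \<infinity>"
  shows "countable {a\<in>Q. \<phi> a \<noteq> 0}"
proof -
  have "finite {a\<in>Q. c \<le> \<phi> a}" if "c > 0" for c
  proof (rule ccontr)
    assume "infinite {a\<in>Q. c \<le> \<phi> a}"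
    then have "\<infinity> = c * emeasure (count_space Q) {a\<in>Q. c \<le> \<phi> a}"
      using \<open>c > 0\<close> by (simp add: ennreal_mult_top)
    also have "\<dots> = (\<integral>\<^sup>+ a. c * indicator {a\<in>Q. c \<le> \<phi> a} a \<partial>count_space Q)"
      by (simp add: nn_integral_cmult_indicator)
    also have "\<dots> \<le> (\<integral>\<^sup>+ a. \<phi> a \<partial>count_space Q)"
      by (intro nn_integral_mono) (auto split: split_indicator)
    finally show False
      using assms by simp
  qed
  moreover have "{a\<in>Q. \<phi> a \<noteq> 0} = (\<Union>n. {a\<in>Q. ennreal (1 / real (Suc n)) \<le> \<phi> a})"
  proof -
    have "\<exists>n. ennreal (1 / real (Suc n)) \<le> x" if "x \<noteq> 0" for x :: ennreal
    proof (cases x)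
      case (real r)
      with \<open>x \<noteq> 0\<close> have "r > 0"
        by auto
      then obtain n where "inverse (real (Suc n)) < r"
        using reals_Archimedean by blast
      with real show ?thesis
        by (intro exI[of _ n]) (simp add: inverse_eq_divide)
    qed simp
    then show ?thesis
      by fastforce
  qed
  ultimately show ?thesis
    by (simp add: countable_finite)
qed

lemma nn_integral_UN_countable:
  fixes h :: "'a \<Rightarrow> ennreal"
  assumes "countable I" "disjoint_family_on X I" "\<And>i. i \<in> I \<Longrightarrow> X i \<in> sets M"
    and "h \<in> borel_measurable M"
  shows "(\<integral>\<^sup>+ x\<in>(\<Union>i\<in>I. X i). h x \<partial>M) = (\<integral>\<^sup>+ i. (\<integral>\<^sup>+ x\<in>X i. h x \<partial>M) \<partial>count_space I)"
proof -
  have "(\<Union>i\<in>I. X i) \<in> sets M"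
    using assms by (intro sets.countable_UN') auto
  with assms show ?thesis
    using emeasure_UN_countable[of I X "density M h"]
    by (simp add: emeasure_density cong: nn_integral_cong_simp)
qed

lemma AE_zero_outside_if_nn_integral_eq:
  fixes h :: "'a \<Rightarrow> ennreal"
  assumes h: "h \<in> borel_measurable M" and S: "S \<in> sets M"
    and eq: "(\<integral>\<^sup>+ x\<in>S. h x \<partial>M) = (\<integral>\<^sup>+ x. h x \<partial>M)" and fin: "(\<integral>\<^sup>+ x. h x \<partial>M) < \<infinity>"
  shows "AE x in M. x \<notin> S \<longrightarrow> h x = 0"
proof -
  have "(\<integral>\<^sup>+ x. h x \<partial>M) = (\<integral>\<^sup>+ x. h x * indicator S x + h x * indicator (- S) x \<partial>M)"
    by (intro nn_integral_cong) (auto split: split_indicator)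
  also have "\<dots> = (\<integral>\<^sup>+ x. h x \<partial>M) + (\<integral>\<^sup>+ x. h x * indicator (- S) x \<partial>M)"
    using h S eq by (subst nn_integral_add) auto
  finally have "(\<integral>\<^sup>+ x. h x * indicator (- S) x \<partial>M) = 0"
    using fin by (auto simp: ennreal_add_left_cancel)
  then have "AE x in M. h x * indicator (- S) x = 0"
    using h S by (subst (asm) nn_integral_0_iff_AE) auto
  then show ?thesis
    by eventually_elim (auto split: split_indicator)
qed

lemma abs_add_powr_le:
  fixes a b p :: real
  assumes "0 \<le> p"
  shows "\<bar>a + b\<bar> powr p \<le> 2 powr p * (\<bar>a\<bar> powr p + \<bar>b\<bar> powr p)"
proof -
  have "\<bar>a + b\<bar> powr p \<le> (2 * max \<bar>a\<bar> \<bar>b\<bar>) powr p"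
    using assms by (intro powr_mono2) auto
  also have "\<dots> = 2 powr p * max \<bar>a\<bar> \<bar>b\<bar> powr p"
    by (simp add: powr_mult)
  also have "max \<bar>a\<bar> \<bar>b\<bar> powr p \<le> \<bar>a\<bar> powr p + \<bar>b\<bar> powr p"
    by (simp add: max_def)
  finally show ?thesis
    by (simp add: mult_left_mono)
qed

lemma sets_mu: "sets mu = Binf"
proof -
  have "sets mu = sigma_sets UNIV Binf"
    unfolding mu_def by (simp add: sets_measure_of Binf_def)
  also have "\<dots> = Binf"
    unfolding Binf_def by (rule sigma_sets_sigma_sets_eq) auto
  finally show ?thesis .
qed

lemma space_mu [simp]: "space mu = UNIV"
  unfolding mu_def by (simp add: space_measure_of_conv)

lemma measurable_coordinate_mu [measurable]: "(\<lambda>x. x n) \<in> borel_measurable mu"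
proof (rule measurableI)
  fix B :: "real set" assume B: "B \<in> sets borel"
  define C where "C i = (if i = n then B else UNIV)" for i
  have "(\<lambda>x. x n) -` B \<inter> space mu = {x. \<forall>i<Suc n. x i \<in> C i}"
    by (auto simp: C_def)
  also have "\<dots> \<in> Binf"
  proof -
    have "\<forall>i<Suc n. C i \<in> sets borel"
      using B by (simp add: C_def)
    then show ?thesis
      unfolding Binf_def by (intro sigma_sets.Basic) blast
  qed
  finally show "(\<lambda>x. x n) -` B \<inter> space mu \<in> sets mu"
    by (simp add: sets_mu)
qed simp

lemma cube_in_sets_mu [measurable]: "cube a \<in> sets mu"
proof -
  have "cube a = {x \<in> space mu. \<forall>n. real_of_int (a n) \<le> x n \<and> x n < real_of_int (a n) + 1}"
    by (simp add: cube_def)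
  also have "\<dots> \<in> sets mu"
    by measurable
  finally show ?thesis .
qed

lemma mem_cube_iff: "x \<in> cube a \<longleftrightarrow> a = (\<lambda>n. \<lfloor>x n\<rfloor>)"
  unfolding cube_def by (auto simp: fun_eq_iff floor_eq_iff intro: floor_unique[symmetric])

lemma disjoint_family_cube: "disjoint_family_on cube J"
  by (auto simp: disjoint_family_on_def mem_cube_iff)

lemma Lp_add:
  assumes "0 \<le> p" and f: "f \<in> Lp p" and g: "g \<in> Lp p"
  shows "(\<lambda>x. f x + g x) \<in> Lp p"
proof -
  have [measurable]: "f \<in> borel_measurable mu" "g \<in> borel_measurable mu"
    using f g by (simp_all add: Lp_def)
  have "(\<integral>\<^sup>+ x. ennreal (\<bar>f x + g x\<bar> powr p) \<partial>mu)
      \<le> (\<integral>\<^sup>+ x. ennreal (2 powr p) * (ennreal (\<bar>f x\<bar> powr p) + ennreal (\<bar>g x\<bar> powr p)) \<partial>mu)"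
    using abs_add_powr_le[OF \<open>0 \<le> p\<close>]
    by (intro nn_integral_mono) (simp add: ennreal_mult'[symmetric] ennreal_plus[symmetric] del: ennreal_plus)
  also have "\<dots> = ennreal (2 powr p) *
      ((\<integral>\<^sup>+ x. ennreal (\<bar>f x\<bar> powr p) \<partial>mu) + (\<integral>\<^sup>+ x. ennreal (\<bar>g x\<bar> powr p) \<partial>mu))"
    by (simp add: nn_integral_cmult nn_integral_add)
  also have "\<dots> < \<infinity>"
    using f g by (simp add: Lp_def ennreal_mult_less_top)
  finally show ?thesis
    by (simp add: Lp_def)
qed

lemma Lp_cmult:
  assumes f: "f \<in> Lp p"
  shows "(\<lambda>x. c * f x) \<in> Lp p"
proof -
  have [measurable]: "f \<in> borel_measurable mu"
    using f by (simp add: Lp_def)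
  have "(\<integral>\<^sup>+ x. ennreal (\<bar>c * f x\<bar> powr p) \<partial>mu)
      = ennreal (\<bar>c\<bar> powr p) * (\<integral>\<^sup>+ x. ennreal (\<bar>f x\<bar> powr p) \<partial>mu)"
    by (simp add: abs_mult powr_mult ennreal_mult' nn_integral_cmult)
  also have "\<dots> < \<infinity>"
    using f by (simp add: Lp_def ennreal_mult_less_top)
  finally show ?thesis
    by (simp add: Lp_def)
qed

lemma cube_support_subset:
  fixes h :: "(nat \<Rightarrow> real) \<Rightarrow> ennreal"
  assumes h: "h \<in> borel_measurable mu"
    and vanish: "AE x in mu. x \<notin> (\<Union>a\<in>J. cube a) \<longrightarrow> h x = 0"
  shows "{a. (\<integral>\<^sup>+ x\<in>cube a. h x \<partial>mu) \<noteq> 0} \<subseteq> J"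
proof
  fix a assume a: "a \<in> {a. (\<integral>\<^sup>+ x\<in>cube a. h x \<partial>mu) \<noteq> 0}"
  show "a \<in> J"
  proof (rule ccontr)
    assume "a \<notin> J"
    then have disjoint: "cube a \<inter> (\<Union>b\<in>J. cube b) = {}"
      by (auto simp: mem_cube_iff)
    from vanish have "AE x in mu. h x * indicator (cube a) x = 0"
      by eventually_elim (use disjoint in \<open>auto split: split_indicator\<close>)
    then have "(\<integral>\<^sup>+ x\<in>cube a. h x \<partial>mu) = 0"
      using h by (subst nn_integral_0_iff_AE) auto
    with a show False
      by simp
  qed
qed

lemma nn_integral_cube_decomposition:
  fixes h :: "(nat \<Rightarrow> real) \<Rightarrow> ennreal"
  assumes J: "countable J" and h: "h \<in> borel_measurable mu"
    and vanish: "AE x in mu. x \<notin> (\<Union>a\<in>J. cube a) \<longrightarrow> h x = 0"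
  defines "supp \<equiv> {a. (\<integral>\<^sup>+ x\<in>cube a. h x \<partial>mu) \<noteq> 0}"
  shows "(\<integral>\<^sup>+ x. h x \<partial>mu) = (\<integral>\<^sup>+ a. (\<integral>\<^sup>+ x\<in>cube a. h x \<partial>mu) \<partial>count_space supp)"
    and "(\<integral>\<^sup>+ a. (\<integral>\<^sup>+ x\<in>cube a. h x \<partial>mu) \<partial>count_space supp) = (\<integral>\<^sup>+ x\<in>(\<Union>a\<in>supp. cube a). h x \<partial>mu)"
proof -
  have "supp \<subseteq> J"
    unfolding supp_def using h vanish by (rule cube_support_subset)
  have "(\<integral>\<^sup>+ x. h x \<partial>mu) = (\<integral>\<^sup>+ x\<in>(\<Union>a\<in>J. cube a). h x \<partial>mu)"
    using vanish by (intro nn_integral_cong_AE) (auto split: split_indicator)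
  also have "\<dots> = (\<integral>\<^sup>+ a. (\<integral>\<^sup>+ x\<in>cube a. h x \<partial>mu) \<partial>count_space J)"
    using J h by (intro nn_integral_UN_countable) (auto simp: disjoint_family_cube)
  also have "\<dots> = (\<integral>\<^sup>+ a. (\<integral>\<^sup>+ x\<in>cube a. h x \<partial>mu) \<partial>count_space supp)"
    using \<open>supp \<subseteq> J\<close> unfolding supp_def
    by (subst (1 2) nn_integral_count_space_indicator) (auto intro!: nn_integral_cong split: split_indicator)
  finally show "(\<integral>\<^sup>+ x. h x \<partial>mu) = (\<integral>\<^sup>+ a. (\<integral>\<^sup>+ x\<in>cube a. h x \<partial>mu) \<partial>count_space supp)" .
  have "countable supp"
    using J \<open>supp \<subseteq> J\<close> by (rule countable_subset[rotated])
  then show "(\<integral>\<^sup>+ a. (\<integral>\<^sup>+ x\<in>cube a. h x \<partial>mu) \<partial>count_space supp) = (\<integral>\<^sup>+ x\<in>(\<Union>a\<in>supp. cube a). h x \<partial>mu)"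
    using h by (intro nn_integral_UN_countable[symmetric]) (auto simp: disjoint_family_cube)
qed

lemma Gp_iff_vanishes_outside_countable_cubes:
  "f \<in> Gp p \<longleftrightarrow> f \<in> Lp p \<and> (\<exists>J. countable J \<and> (AE x in mu. x \<notin> (\<Union>a\<in>J. cube a) \<longrightarrow> f x = 0))"
  (is "_ \<longleftrightarrow> ?rhs")
proof -
  define h where "h x = ennreal (\<bar>f x\<bar> powr p)" for x
  have h_eq_0: "h x = 0 \<longleftrightarrow> f x = 0" for x
    by (simp add: h_def)
  show ?thesis
  proof
    assume f: "f \<in> Gp p"
    then have "f \<in> borel_measurable mu" and fin: "(\<integral>\<^sup>+ x. h x \<partial>mu) < \<infinity>"
      by (auto simp: Gp_def Lp_def h_def)
    then have h: "h \<in> borel_measurable mu"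
      unfolding h_def by measurable
    have sum: "(\<integral>\<^sup>+ x. h x \<partial>mu) = (\<integral>\<^sup>+ a. (\<integral>\<^sup>+ x\<in>cube a. h x \<partial>mu) \<partial>count_space (Ofun p f))"
      and Ffun: "(\<integral>\<^sup>+ x\<in>Ffun p f. h x \<partial>mu) = (\<integral>\<^sup>+ x. h x \<partial>mu)"
      using f by (simp_all add: Gp_def h_def)
    have "countable (Ofun p f)"
      using fin sum
        countable_nonzero_if_nn_integral_count_space_finite
          [where Q="Ofun p f" and \<phi>="\<lambda>a. \<integral>\<^sup>+ x\<in>cube a. h x \<partial>mu"]
      by (simp add: Ofun_def h_def)
    then have "Ffun p f \<in> sets mu"
      unfolding Ffun_def by (intro sets.countable_UN') auto
    then have "AE x in mu. x \<notin> Ffun p f \<longrightarrow> f x = 0"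
      using AE_zero_outside_if_nn_integral_eq[OF h _ Ffun fin] by (simp add: h_eq_0)
    with \<open>countable (Ofun p f)\<close> f show ?rhs
      by (auto simp: Gp_def Ffun_def)
  next
    assume ?rhs
    then obtain J where f: "f \<in> Lp p" and J: "countable J"
      and vanish: "AE x in mu. x \<notin> (\<Union>a\<in>J. cube a) \<longrightarrow> h x = 0"
      by (auto simp: h_eq_0)
    have "f \<in> borel_measurable mu"
      using f by (simp add: Lp_def)
    then have h: "h \<in> borel_measurable mu"
      unfolding h_def by measurable
    show "f \<in> Gp p"
      using f nn_integral_cube_decomposition[OF J h vanish]
      by (simp add: Gp_def Ofun_def Ffun_def h_def)
  qed
qed

theorem lemma3p3:
  fixes p :: real
  assumes "1 \<le> p"
  shows "Gp p \<subseteq> Lp p \<and> (\<lambda>x. 0) \<in> Gp p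
    \<and> (\<forall>f\<in>Gp p. \<forall>g\<in>Gp p. (\<lambda>x. f x + g x) \<in> Gp p)
    \<and> (\<forall>c::real. \<forall>f\<in>Gp p. (\<lambda>x. c * f x) \<in> Gp p)"
proof (intro conjI ballI allI)
  show "Gp p \<subseteq> Lp p"
    by (auto simp: Gp_def)
  show "(\<lambda>x. 0) \<in> Gp p"
    by (auto simp: Gp_iff_vanishes_outside_countable_cubes Lp_def)
next
  fix f g assume "f \<in> Gp p" "g \<in> Gp p"
  then obtain J K where "f \<in> Lp p" "countable J" "AE x in mu. x \<notin> (\<Union>a\<in>J. cube a) \<longrightarrow> f x = 0"
    and "g \<in> Lp p" "countable K" "AE x in mu. x \<notin> (\<Union>a\<in>K. cube a) \<longrightarrow> g x = 0"
    by (auto simp: Gp_iff_vanishes_outside_countable_cubes)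
  moreover from this have "AE x in mu. x \<notin> (\<Union>a\<in>J \<union> K. cube a) \<longrightarrow> f x + g x = 0"
    by (auto elim!: AE_mp)
  ultimately show "(\<lambda>x. f x + g x) \<in> Gp p"
    using assms Lp_add by (auto simp: Gp_iff_vanishes_outside_countable_cubes)
next
  fix c f assume "f \<in> Gp p"
  then obtain J where "f \<in> Lp p" "countable J" "AE x in mu. x \<notin> (\<Union>a\<in>J. cube a) \<longrightarrow> f x = 0"
    by (auto simp: Gp_iff_vanishes_outside_countable_cubes)
  moreover from this have "AE x in mu. x \<notin> (\<Union>a\<in>J. cube a) \<longrightarrow> c * f x = 0"
    by (auto elim!: AE_mp)
  ultimately show "(\<lambda>x. c * f x) \<in> Gp p"
    using Lp_cmult by (auto simp: Gp_iff_vanishes_outside_countable_cubes)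
qed

end
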